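(* Let $\Omega=\{\Omega_1,\dots,\Omega_N\}$ be the vertex set of a directed weighted graph with (not necessarily symmetric) weight function $d$, let $1\le n<N$, and let $i,j\in\{1,\dots,n\}$. Let $x_1=MMJ(\Omega_i,\Omega_j~|~\Omega_{[1,n]})$, $t_1=MMJ(\Omega_i,\Omega_{n+1}~|~\Omega_{[1,n+1]})$, $t_2=MMJ(\Omega_{n+1},\Omega_j~|~\Omega_{[1,n+1]})$ and $x_2=\max(t_1,t_2)$. Then $MMJ(\Omega_i,\Omega_j~|~\Omega_{[1,n+1]})=\min(x_1,x_2)$.
   Context: $\Omega$ is a finite set of points indexed $\Omega_1,\dots,\Omega_N$, and $\Omega_{[1,n]}=\{\Omega_1,\dots,\Omega_n\}$. $d(x,y)\ge 0$ is the weight of the directed edge from $x$ to $y$ (possibly $d(x,y)\neq d(y,x)$). For a subset $S\subseteq\Omega$, a (directed) path from $i$ to $j$ in $S$ is a finite sequence of points of $S$ (at least two) starting at $i$ and ending at $j$, with no repeated points except that start and end may coincide when $i=j$. A jump of a path is $d(x,y)$ for consecutive points $x$ followed by $y$, and $max\_jump$ of a path is its largest jump. The Min-Max-Jump distance with context $S$ is $MMJ(i,j~|~S)=\min\{max\_jump(\epsilon): \epsilon \text{ a path from } i \text{ to } j \text{ in } S\}$ for $i,j\in S$, with $MMJ(i,i~|~S)=0$. *)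

theory Defs
  imports Complex_Main
begin

definition is_path :: "'a set \<Rightarrow> 'a \<Rightarrow> 'a \<Rightarrow> 'a list \<Rightarrow> bool" where
  "is_path S i j p \<longleftrightarrow> length p \<ge> 2 \<and> hd p = i \<and> last p = j \<and> set p \<subseteq> S \<and>
     (distinct p \<or> (i = j \<and> distinct (tl p)))"

definition max_jump :: "('a \<Rightarrow> 'a \<Rightarrow> real) \<Rightarrow> 'a list \<Rightarrow> real" where
  "max_jump d p = Max (set (map (\<lambda>(x, y). d x y) (zip p (tl p))))"

definition MMJ :: "('a \<Rightarrow> 'a \<Rightarrow> real) \<Rightarrow> 'a \<Rightarrow> 'a \<Rightarrow> 'a set \<Rightarrow> real" where
  "MMJ d i j S = (if i = j then 0 else Min {max_jump d p | p. is_path S i j p})"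

end

theory Submission
  imports Defs "HOL-Library.Transitive_Closure_Table"
begin

text \<open>For a \<noteq> b, MMJ d a b S \<le> t holds exactly when b is reachable from a in the threshold
graph on S whose edges are the jumps of weight at most t: a walk can always be shortened to a
path without increasing its largest jump. A walk in insert z S between two points other than z
either avoids z, and then lies in S, or passes through z and splits into walks a \<leadsto> z and
z \<leadsto> b. Hence both sides of the identity have the same sublevel sets.\<close>

lemma rtrancl_path_iff_successively:
  "rtrancl_path r x xs y \<longleftrightarrow> successively r (x # xs) \<and> last (x # xs) = y"
proof
  show "rtrancl_path r x xs y \<Longrightarrow> successively r (x # xs) \<and> last (x # xs) = y"
    by (induction rule: rtrancl_path.induct) (auto simp: successively_Cons)
  show "successively r (x # xs) \<and> last (x # xs) = y \<Longrightarrow> rtrancl_path r x xs y"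
    by (induction xs arbitrary: x) (auto simp: successively_Cons intro: rtrancl_path.intros)
qed

lemma trancl_iff_distinct_walk:
  assumes "a \<noteq> b"
  shows "(a, b) \<in> r\<^sup>+ \<longleftrightarrow>
    (\<exists>p. distinct p \<and> length p \<ge> 2 \<and> hd p = a \<and> last p = b \<and> successively (\<lambda>x y. (x, y) \<in> r) p)"
proof -
  let ?r = "\<lambda>x y. (x, y) \<in> r"
  have "(a, b) \<in> r\<^sup>+ \<longleftrightarrow> (\<exists>xs. rtrancl_path ?r a xs b)"
    using assms by (simp add: rtranclp_eq_rtrancl_path [symmetric] rtranclp_rtrancl_eq rtrancl_eq_or_trancl)
  also have "\<dots> \<longleftrightarrow> (\<exists>xs. distinct (a # xs) \<and> rtrancl_path ?r a xs b)"
    by (meson rtrancl_path_distinct)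
  also have "\<dots> \<longleftrightarrow> (\<exists>p. distinct p \<and> length p \<ge> 2 \<and> hd p = a \<and> last p = b \<and> successively ?r p)"
  proof
    assume "\<exists>xs. distinct (a # xs) \<and> rtrancl_path ?r a xs b"
    then obtain xs where "distinct (a # xs)" "successively ?r (a # xs)" "last (a # xs) = b"
      by (auto simp: rtrancl_path_iff_successively)
    moreover have "xs \<noteq> []" using \<open>last (a # xs) = b\<close> assms by auto
    ultimately show "\<exists>p. distinct p \<and> length p \<ge> 2 \<and> hd p = a \<and> last p = b \<and> successively ?r p"
      by (intro exI[of _ "a # xs"]) (auto simp: Suc_le_eq)
  next
    assume "\<exists>p. distinct p \<and> length p \<ge> 2 \<and> hd p = a \<and> last p = b \<and> successively ?r p"
    then obtain p where p: "distinct p" "length p \<ge> 2" "hd p = a" "last p = b" "successively ?r p"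
      by blast
    then have "p = a # tl p"
      by (cases p) auto
    with p show "\<exists>xs. distinct (a # xs) \<and> rtrancl_path ?r a xs b"
      by (metis rtrancl_path_iff_successively)
  qed
  finally show ?thesis .
qed

lemma successively_Restr_iff:
  "length p \<ge> 2 \<Longrightarrow>
    successively (\<lambda>x y. (x, y) \<in> Restr r A) p \<longleftrightarrow> set p \<subseteq> A \<and> successively (\<lambda>x y. (x, y) \<in> r) p"
proof (induction p rule: induct_list012)
  case (3 x y zs)
  then show ?case by (cases zs) auto
qed auto

lemma trancl_avoid_or_through:
  assumes "(a, b) \<in> r\<^sup>+" "a \<noteq> z" "b \<noteq> z"
  shows "(a, b) \<in> (Restr r (- {z}))\<^sup>+ \<or> (a, z) \<in> r\<^sup>+ \<and> (z, b) \<in> r\<^sup>+"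
  using assms(1,3)
proof (induction rule: trancl_induct)
  case (base y)
  then show ?case using assms(2) by blast
next
  case (step y w)
  show ?case
  proof (cases "y = z")
    case True
    then show ?thesis using step.hyps by blast
  next
    case False
    have "(y, w) \<in> Restr r (- {z})"
      using step.hyps(2) step.prems False by blast
    with step.IH[OF False] step.hyps(2) show ?thesis
      by (blast intro: trancl_into_trancl)
  qed
qed

lemma trancl_Restr_insert:
  assumes "a \<noteq> z" "b \<noteq> z"
  shows "(a, b) \<in> (Restr r (insert z A))\<^sup>+ \<longleftrightarrow>
    (a, b) \<in> (Restr r A)\<^sup>+ \<or> (a, z) \<in> (Restr r (insert z A))\<^sup>+ \<and> (z, b) \<in> (Restr r (insert z A))\<^sup>+"
    (is "?lhs \<longleftrightarrow> ?rhs")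
proof
  assume ?lhs
  moreover have "(Restr (Restr r (insert z A)) (- {z}))\<^sup>+ \<subseteq> (Restr r A)\<^sup>+"
    by (rule trancl_mono_subset) blast
  ultimately show ?rhs
    using trancl_avoid_or_through[OF _ assms] by blast
next
  have "(Restr r A)\<^sup>+ \<subseteq> (Restr r (insert z A))\<^sup>+"
    by (rule trancl_mono_subset) blast
  then show "?rhs \<Longrightarrow> ?lhs"
    using trancl_trans[of a z _ b] by blast
qed

lemma max_jump_le_iff:
  assumes "length p \<ge> 2"
  shows "max_jump d p \<le> t \<longleftrightarrow> successively (\<lambda>x y. d x y \<le> t) p"
proof -
  have "zip p (tl p) \<noteq> []"
    using assms by (cases p) auto
  moreover have "successively P p \<longleftrightarrow> (\<forall>(x, y) \<in> set (zip p (tl p)). P x y)" for P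
    by (induction p rule: induct_list012) auto
  ultimately show ?thesis
    unfolding max_jump_def by (auto simp: Max_le_iff)
qed

lemma finite_path_max_jumps:
  assumes "finite S" "a \<noteq> b"
  shows "finite {max_jump d p | p. is_path S a b p}"
proof -
  have "{p. is_path S a b p} \<subseteq> {p. set p \<subseteq> S \<and> distinct p}"
    using assms(2) by (auto simp: is_path_def)
  then have "finite {p. is_path S a b p}"
    using finite_subset_distinct[OF assms(1)] by (rule finite_subset)
  then show ?thesis
    by (simp add: setcompr_eq_image)
qed

lemma MMJ_le_iff_trancl:
  assumes "finite S" "a \<in> S" "b \<in> S" "a \<noteq> b"
  shows "MMJ d a b S \<le> t \<longleftrightarrow> (a, b) \<in> (Restr {(x, y). d x y \<le> t} S)\<^sup>+"
proof -
  have "is_path S a b [a, b]"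
    using assms(2,3) by (simp add: is_path_def)
  then have "{max_jump d p | p. is_path S a b p} \<noteq> {}"
    by blast
  then have "MMJ d a b S \<le> t \<longleftrightarrow> (\<exists>p. is_path S a b p \<and> max_jump d p \<le> t)"
    using assms(4) unfolding MMJ_def
    by (simp add: Min_le_iff[OF finite_path_max_jumps[OF assms(1,4)]]) blast
  also have "\<dots> \<longleftrightarrow> (\<exists>p. distinct p \<and> length p \<ge> 2 \<and> hd p = a \<and> last p = b \<and>
      successively (\<lambda>x y. (x, y) \<in> Restr {(x, y). d x y \<le> t} S) p)"
  proof -
    have "is_path S a b p \<and> max_jump d p \<le> t \<longleftrightarrow> distinct p \<and> length p \<ge> 2 \<and> hd p = a \<and>
      last p = b \<and> successively (\<lambda>x y. (x, y) \<in> Restr {(x, y). d x y \<le> t} S) p" for p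
      using assms(4) successively_Restr_iff[of p "{(x, y). d x y \<le> t}" S] max_jump_le_iff[of p d t]
      unfolding is_path_def by auto
    then show ?thesis
      by blast
  qed
  also have "\<dots> \<longleftrightarrow> (a, b) \<in> (Restr {(x, y). d x y \<le> t} S)\<^sup>+"
    using trancl_iff_distinct_walk[OF assms(4)] by blast
  finally show ?thesis .
qed

lemma MMJ_nonneg:
  assumes "finite S" "a \<in> S" "b \<in> S" "\<And>x y. d x y \<ge> 0"
  shows "MMJ d a b S \<ge> 0"
proof (rule ccontr)
  assume neg: "\<not> MMJ d a b S \<ge> 0"
  then have "a \<noteq> b" by (auto simp: MMJ_def)
  have "MMJ d a b S < d x y" for x y
    using neg assms(4)[of x y] by linarith
  then have "Restr {(x, y). d x y \<le> MMJ d a b S} S = {}"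
    by (simp add: not_le [symmetric])
  then show False
    using MMJ_le_iff_trancl[OF assms(1-3) \<open>a \<noteq> b\<close>, of d "MMJ d a b S"] by simp
qed

lemma MMJ_insert:
  assumes "finite S" "a \<in> S" "b \<in> S" "a \<noteq> z" "b \<noteq> z" "\<And>x y. d x y \<ge> 0"
  shows "MMJ d a b (insert z S) =
    min (MMJ d a b S) (max (MMJ d a z (insert z S)) (MMJ d z b (insert z S)))"
proof (cases "a = b")
  case True
  then show ?thesis
    using MMJ_nonneg[of "insert z S" a z d] assms by (simp add: MMJ_def)
next
  case False
  let ?S' = "insert z S" and ?G = "\<lambda>t A. Restr {(x, y). d x y \<le> t} A"
  have "MMJ d a b ?S' \<le> t \<longleftrightarrow>
      min (MMJ d a b S) (max (MMJ d a z ?S') (MMJ d z b ?S')) \<le> t" for t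
  proof -
    have "MMJ d a b ?S' \<le> t \<longleftrightarrow> (a, b) \<in> (?G t ?S')\<^sup>+"
      using assms False by (simp add: MMJ_le_iff_trancl)
    also have "\<dots> \<longleftrightarrow> (a, b) \<in> (?G t S)\<^sup>+ \<or> (a, z) \<in> (?G t ?S')\<^sup>+ \<and> (z, b) \<in> (?G t ?S')\<^sup>+"
      by (rule trancl_Restr_insert[OF assms(4,5)])
    also have "\<dots> \<longleftrightarrow> MMJ d a b S \<le> t \<or> MMJ d a z ?S' \<le> t \<and> MMJ d z b ?S' \<le> t"
      using assms False by (simp add: MMJ_le_iff_trancl)
    also have "\<dots> \<longleftrightarrow> min (MMJ d a b S) (max (MMJ d a z ?S') (MMJ d z b ?S')) \<le> t"
      by (simp add: min_le_iff_disj)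
    finally show ?thesis .
  qed
  then show ?thesis
    by (metis order.antisym order.refl)
qed

theorem theorem6p2:
  fixes \<Omega> :: "nat \<Rightarrow> 'a" and d :: "'a \<Rightarrow> 'a \<Rightarrow> real" and N n i j :: nat
  assumes inj: "inj_on \<Omega> {1..N}"
    and d_nonneg: "\<And>x y. d x y \<ge> 0"
    and n: "1 \<le> n" "n < N"
    and i: "i \<in> {1..n}" and j: "j \<in> {1..n}"
  shows "MMJ d (\<Omega> i) (\<Omega> j) (\<Omega> ` {1..Suc n}) =
         min (MMJ d (\<Omega> i) (\<Omega> j) (\<Omega> ` {1..n}))
             (max (MMJ d (\<Omega> i) (\<Omega> (Suc n)) (\<Omega> ` {1..Suc n}))
                  (MMJ d (\<Omega> (Suc n)) (\<Omega> j) (\<Omega> ` {1..Suc n})))"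
proof -
  have "\<Omega> ` {1..Suc n} = insert (\<Omega> (Suc n)) (\<Omega> ` {1..n})"
    by (simp add: atLeastAtMostSuc_conv)
  moreover have "\<Omega> i \<noteq> \<Omega> (Suc n)" "\<Omega> j \<noteq> \<Omega> (Suc n)"
    using inj_onD[OF inj] i j n by fastforce+
  ultimately show ?thesis
    using MMJ_insert[of "\<Omega> ` {1..n}" "\<Omega> i" "\<Omega> j" "\<Omega> (Suc n)" d] i j d_nonneg by simp
qed

end
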